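(* Let $a=\sum_{t=0}^7a_te_t\in C\ell_{1,2}$ be nonzero with $P(a)=0$. Let $K=a_0^2+a_2^2+a_4^2+a_6^2$, $T_1=a_0a_1-a_2a_3-a_4a_5+a_6a_7$, $T_3=a_0a_3+a_1a_2+a_4a_7+a_5a_6$, $T_5=a_0a_5+a_1a_4-a_2a_7-a_3a_6$. Then $T_1^2+T_3^2+T_5^2=K^2$.
   Context: $C\ell_{1,2}$ is the real Clifford algebra with real basis $e_0=1,e_1,\dots,e_7$ (where $e_1=i_1$, $e_2=i_2$, $e_3=i_1i_2$, $e_4=i_3$, $e_5=i_1i_3$, $e_6=i_2i_3$, $e_7=i_1i_2i_3$, $i_1^2=1$, $i_2^2=i_3^2=-1$, $i_ti_m=-i_mi_t$ for $t\ne m$). For $a=\sum a_te_t$: $N(a)=a_0^2-a_1^2+a_2^2-a_3^2+a_4^2-a_5^2+a_6^2-a_7^2$, $T(a)=a_0a_7+a_2a_5-a_1a_6-a_3a_4$, $P(a)=N(a)^2+4T(a)^2$. *)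

theory Defs
  imports Main Complex_Main
begin

text \<open>An element a = sum_{t=0}^7 a_t e_t of Cl_{1,2} is represented by its
real coordinate function a :: nat => real (only indices 0..7 are relevant).\<close>

definition clN :: "(nat \<Rightarrow> real) \<Rightarrow> real" where
  "clN a = (a 0)^2 - (a 1)^2 + (a 2)^2 - (a 3)^2 + (a 4)^2 - (a 5)^2 + (a 6)^2 - (a 7)^2"

definition clT :: "(nat \<Rightarrow> real) \<Rightarrow> real" where
  "clT a = a 0 * a 7 + a 2 * a 5 - a 1 * a 6 - a 3 * a 4"

definition clP :: "(nat \<Rightarrow> real) \<Rightarrow> real" where
  "clP a = (clN a)^2 + 4 * (clT a)^2"

end

theory Submission
  imports Defs
begin

text \<open>With \<open>K = a\<^sub>0\<^sup>2 + a\<^sub>2\<^sup>2 + a\<^sub>4\<^sup>2 + a\<^sub>6\<^sup>2\<close>, the polynomial identity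
  \<open>T\<^sub>1\<^sup>2 + T\<^sub>3\<^sup>2 + T\<^sub>5\<^sup>2 = K\<^sup>2 - K N(a) - T(a)\<^sup>2\<close> holds for every \<open>a\<close>, and \<open>P(a) = N(a)\<^sup>2 + 4 T(a)\<^sup>2\<close>
  vanishes only when \<open>N(a) = T(a) = 0\<close>.\<close>

lemma clP_eq_0_iff: "clP a = 0 \<longleftrightarrow> clN a = 0 \<and> clT a = 0"
  unfolding clP_def by (simp add: add_nonneg_eq_0_iff)

lemma sum_squares_T135_eq:
  fixes a :: "nat \<Rightarrow> real"
  shows "(a 0 * a 1 - a 2 * a 3 - a 4 * a 5 + a 6 * a 7)^2
       + (a 0 * a 3 + a 1 * a 2 + a 4 * a 7 + a 5 * a 6)^2
       + (a 0 * a 5 + a 1 * a 4 - a 2 * a 7 - a 3 * a 6)^2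
       = ((a 0)^2 + (a 2)^2 + (a 4)^2 + (a 6)^2)^2
         - ((a 0)^2 + (a 2)^2 + (a 4)^2 + (a 6)^2) * clN a - (clT a)^2"
  unfolding clN_def clT_def by algebra

theorem lemma3p3:
  fixes a :: "nat \<Rightarrow> real"
  assumes nonzero: "\<exists>t\<le>7. a t \<noteq> 0"
    and P0: "clP a = 0"
  shows "(a 0 * a 1 - a 2 * a 3 - a 4 * a 5 + a 6 * a 7)^2
       + (a 0 * a 3 + a 1 * a 2 + a 4 * a 7 + a 5 * a 6)^2
       + (a 0 * a 5 + a 1 * a 4 - a 2 * a 7 - a 3 * a 6)^2
       = ((a 0)^2 + (a 2)^2 + (a 4)^2 + (a 6)^2)^2"
proof -
  from P0 have "clN a = 0" "clT a = 0"
    by (simp_all add: clP_eq_0_iff)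
  then show ?thesis
    using sum_squares_T135_eq[of a] by simp
qed

end
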